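(* For all integers $n\geq0$, $$s_1(n)+\sum_{j\geq1}(-1)^j\left(s_1(n-j(3j-2))+s_1(n-j(3j+2))\right)=s_2(n)+\sum_{j\geq1}(-1)^j\left(s_2(n-j(3j-1))+s_2(n-j(3j+1))\right)$$ and this common value equals $1$ if $n=6\,\frac{j(3j-1)}{2}$ for some even $j\in\mathbb{Z}$, equals $-1$ if $n=6\,\frac{j(3j-1)}{2}$ for some odd $j\in\mathbb{Z}$, and equals $0$ otherwise. (Explicitly, the sums are $s_1(n)-s_1(n-1)-s_1(n-5)+s_1(n-8)+s_1(n-16)-\cdots$ and $s_2(n)-s_2(n-2)-s_2(n-4)+s_2(n-10)+s_2(n-14)-\cdots$.)
   Context: $s_1(n)$ (resp. $s_2(n)$) is the number of partitions of $n$ all of whose parts are congruent to $\pm1$ (resp. $\pm2$) modulo $6$, with value $1$ at $n=0$ and $0$ at negative arguments. The numbers $j(3j-1)/2$, $j\in\mathbb{Z}$, are the generalized pentagonal numbers, distinct for distinct $j$. *)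

theory Defs
  imports Main "HOL-Library.Multiset"
begin

definition parts_count :: "nat set \<Rightarrow> int \<Rightarrow> int" where
  "parts_count R m = (if m < 0 then 0 else
     int (card {M :: nat multiset. (\<forall>p\<in>#M. 0 < p \<and> p mod 6 \<in> R) \<and> sum_mset M = nat m}))"

definition s1 :: "int \<Rightarrow> int" where "s1 = parts_count {1, 5}"
definition s2 :: "int \<Rightarrow> int" where "s2 = parts_count {2, 4}"

end

theory Submission
  imports Defs "HOL-Computational_Algebra.Formal_Power_Series"
begin

text \<open>
  Write (a;q)_n for the q-Pochhammer product of 1 - a q^k over k < n, and let
  F_b = 1 / ((q^b;q^6)_inf (q^(6-b);q^6)_inf) be the generating function of partitions into parts
  congruent to +-b modulo 6. The two signed sums of the theorem are the coefficients of q^n in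
  F_b(q) times the theta series of (-1)^j q^(3j^2 - (3-b)j), for b = 1 and b = 2. By the Jacobi
  triple product with base q^6 and z = q^b this theta series equals
  (q^6;q^6)_inf (q^b;q^6)_inf (q^(6-b);q^6)_inf, so in both cases the product collapses to
  (q^6;q^6)_inf, which Euler's pentagonal theorem (the triple product with base q^18) expands as
  the sum of (-1)^j q^(6 j(3j-1)/2).

  The argument needs only finite products: the finite triple product follows from Gauss's q-binomial
  theorem, and coefficients up to q^N are compared modulo X^(N+1), where the infinite products
  may be cut off after N factors.
\<close>

lemma prod_lessThan_add: "(\<Prod>k<m + n. f (k::nat)) = (\<Prod>k<m. f k) * (\<Prod>k<n. f (m + k))"
  by (induction n) (simp_all add: mult_ac)

definition qpochhammer :: "'a::comm_ring_1 \<Rightarrow> 'a \<Rightarrow> nat \<Rightarrow> 'a" where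
  "qpochhammer a q n = (\<Prod>k<n. 1 - a * q ^ k)"

lemma qpochhammer_0 [simp]: "qpochhammer a q 0 = 1"
  by (simp add: qpochhammer_def)

lemma qpochhammer_Suc: "qpochhammer a q (Suc n) = qpochhammer a q n * (1 - a * q ^ n)"
  by (simp add: qpochhammer_def)

lemma qpochhammer_add:
  "qpochhammer a q (m + n) = qpochhammer a q m * qpochhammer (a * q ^ m) q n"
  by (induction n) (simp_all add: qpochhammer_Suc power_add mult_ac)

lemma qpochhammer_mult:
  "qpochhammer a q (m * n) = (\<Prod>r<m. qpochhammer (a * q ^ r) (q ^ m) n)"
proof (induction n)
  case (Suc n)
  have "qpochhammer a q (m * Suc n) = qpochhammer a q (m * n) * qpochhammer (a * q ^ (m * n)) q m"
    by (simp only: mult_Suc_right add.commute [of m] qpochhammer_add)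
  also have "qpochhammer (a * q ^ (m * n)) q m = (\<Prod>r<m. 1 - a * q ^ r * (q ^ m) ^ n)"
    unfolding qpochhammer_def by (intro prod.cong) (simp_all add: power_add power_mult mult_ac)
  finally show ?case
    using Suc by (simp add: qpochhammer_Suc prod.distrib)
qed simp

lemma qpochhammer_self_Suc: "qpochhammer q q (Suc n) = qpochhammer q q n * (1 - q ^ Suc n)"
  by (simp add: qpochhammer_Suc)

lemma Suc_choose_two: "Suc i choose 2 = (i choose 2) + i"
  by (simp add: numeral_2_eq_2)

lemma sum_lessThan_choose_two: "(\<Sum>k<n. k) = n choose 2"
  by (induction n) (simp_all add: Suc_choose_two numeral_2_eq_2)

fun qbinomial :: "'a::comm_ring_1 \<Rightarrow> nat \<Rightarrow> nat \<Rightarrow> 'a" where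
  "qbinomial q 0 i = (if i = 0 then 1 else 0)"
| "qbinomial q (Suc m) i =
     qbinomial q m i + (if i = 0 then 0 else q ^ (Suc m - i) * qbinomial q m (i - 1))"

lemma qbinomial_eq_0: "m < i \<Longrightarrow> qbinomial q m i = 0"
  by (induction m arbitrary: i) auto

lemma qbinomial_0_right [simp]: "qbinomial q m 0 = 1"
  by (induction m) auto

lemma qbinomial_same [simp]: "qbinomial q m m = 1"
  by (induction m) (auto simp: qbinomial_eq_0)

theorem qbinomial_theorem:
  "(\<Prod>k<m. x + y * q ^ k) = (\<Sum>i\<le>m. qbinomial q m i * q ^ (i choose 2) * y ^ i * x ^ (m - i))"
proof (induction m)
  case (Suc m)
  define t where "t i = qbinomial q m i * q ^ (i choose 2) * y ^ i * x ^ (m - i)" for i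
  have old: "(\<Sum>i\<le>Suc m. qbinomial q m i * q ^ (i choose 2) * y ^ i * x ^ (Suc m - i))
      = (\<Sum>i\<le>m. t i) * x"
    by (simp add: qbinomial_eq_0 t_def sum_distrib_left sum_distrib_right Suc_diff_le mult_ac)
  have new: "(\<Sum>i\<le>Suc m. (if i = 0 then 0 else q ^ (Suc m - i) * qbinomial q m (i - 1))
        * q ^ (i choose 2) * y ^ i * x ^ (Suc m - i))
      = (\<Sum>i\<le>m. t i) * (y * q ^ m)"
  proof -
    have "q ^ (m - i) * q ^ (Suc i choose 2) = q ^ (i choose 2) * q ^ m" if "i \<le> m" for i
      using that by (simp add: Suc_choose_two add.commute flip: power_add)
    then have "q ^ (m - i) * qbinomial q m i * q ^ (Suc i choose 2) * y ^ Suc i * x ^ (m - i)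
        = t i * (y * q ^ m)" if "i \<le> m" for i
      using that by (simp add: t_def mult_ac)
    then show ?thesis
      by (simp add: sum.atMost_Suc_shift del: sum.atMost_Suc) (simp add: sum_distrib_right)
  qed
  have "(\<Prod>k<Suc m. x + y * q ^ k) = (\<Sum>i\<le>m. t i) * x + (\<Sum>i\<le>m. t i) * (y * q ^ m)"
    using Suc by (simp add: t_def distrib_left)
  also have "\<dots> = (\<Sum>i\<le>Suc m. qbinomial q (Suc m) i * q ^ (i choose 2) * y ^ i * x ^ (Suc m - i))"
    by (simp only: old [symmetric] new [symmetric] qbinomial.simps distrib_right sum.distrib)
  finally show ?case .
qed (simp add: numeral_2_eq_2)

lemma qbinomial_qpochhammer:
  "i \<le> m \<Longrightarrow> qbinomial q m i * qpochhammer q q i * qpochhammer q q (m - i) = qpochhammer q q m"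
proof (induction m arbitrary: i)
  case (Suc m)
  let ?P = "qpochhammer q q"
  consider "i = 0" | "i = Suc m" | j where "i = Suc j" "j < m"
    using Suc.prems by (cases i) (auto simp: le_less)
  then show ?case
  proof cases
    case 3
    have "qbinomial q (Suc m) i * ?P i * ?P (Suc m - i)
        = (qbinomial q m i * ?P i * ?P (m - i)) * (1 - q ^ (Suc m - i))
          + q ^ (Suc m - i) * (1 - q ^ i) * (qbinomial q m j * ?P j * ?P (m - j))"
    proof -
      have rec: "qbinomial q (Suc m) i = qbinomial q m i + q ^ (Suc m - i) * qbinomial q m j"
        using 3 by simp
      have split: "?P i = ?P j * (1 - q ^ i)" "?P (Suc m - i) = ?P (m - i) * (1 - q ^ (Suc m - i))"
        "?P (m - j) = ?P (m - i) * (1 - q ^ (Suc m - i))"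
        using 3 by (simp_all add: qpochhammer_self_Suc flip: Suc_diff_Suc)
      show ?thesis
        unfolding rec split by (simp add: algebra_simps)
    qed
    also have "\<dots> = ?P m * (1 - q ^ (Suc m - i) * q ^ i)"
    proof -
      have "i \<le> m" "j \<le> m"
        using 3 by simp_all
      then show ?thesis
        by (simp only: Suc.IH) (simp add: algebra_simps)
    qed
    also have "q ^ (Suc m - i) * q ^ i = q ^ Suc m"
      using Suc.prems by (simp flip: power_add)
    finally show ?thesis
      by (simp add: qpochhammer_self_Suc)
  qed simp_all
qed simp

lemma qbinomial_mult_qpochhammer:
  fixes q :: "'a::idom"
  assumes "qpochhammer q q i \<noteq> 0"
  shows "qbinomial q (i + k) i * qpochhammer q q k = qpochhammer (q ^ Suc i) q k"
proof -
  have "qpochhammer q q i * (qbinomial q (i + k) i * qpochhammer q q k)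
      = qpochhammer q q i * qpochhammer (q ^ Suc i) q k"
    using qbinomial_qpochhammer [of i "i + k" q] qpochhammer_add [of q q i k]
    by (simp add: mult_ac)
  with assms show ?thesis
    by simp
qed

lemma qbinomial_symmetric:
  fixes q :: "'a::idom"
  assumes "qpochhammer q q i \<noteq> 0" "qpochhammer q q k \<noteq> 0"
  shows "qbinomial q (i + k) i = qbinomial q (i + k) k"
proof -
  have "(qpochhammer q q i * qpochhammer q q k) * qbinomial q (i + k) i
      = (qpochhammer q q i * qpochhammer q q k) * qbinomial q (i + k) k"
    using qbinomial_qpochhammer [of i "i + k" q] qbinomial_qpochhammer [of k "i + k" q]
    by (simp add: mult_ac)
  with assms show ?thesis
    by simp
qed

section \<open>The finite Jacobi triple product\<close>

definition binom2 :: "int \<Rightarrow> int" where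
  "binom2 j = j * (j - 1) div 2"

lemma binom2_double: "2 * binom2 j = j * (j - 1)"
  unfolding binom2_def by simp

lemma binom2_add: "binom2 (j + k) = binom2 j + binom2 k + j * k"
  using binom2_double [of "j + k"] binom2_double [of j] binom2_double [of k]
  by (simp add: algebra_simps)

lemma binom2_minus: "binom2 (- j) = binom2 j + j"
  using binom2_double [of j] binom2_double [of "- j"] by (simp add: algebra_simps)

lemma binom2_of_nat: "binom2 (int n) = int (n choose 2)"
  by (cases n) (simp_all add: binom2_def choose_two of_nat_div algebra_simps)

lemma binom2_nonneg: "0 \<le> binom2 j"
proof -
  have "0 \<le> j * (j - 1)"
    by (cases "j \<le> 0") (simp_all add: mult_nonpos_nonpos)
  then show ?thesis
    using binom2_double [of j] by simp
qed

lemma minus_one_power_add_eq_abs_diff: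
  "(-1 :: 'a::ring_1) ^ (m + n) = (-1) ^ nat \<bar>int m - int n\<bar>"
proof -
  have "even (m + n) \<longleftrightarrow> even (nat \<bar>int m - int n\<bar>)"
    by (cases "n \<le> m") (auto simp: even_nat_iff nat_diff_distrib)
  then show ?thesis
    by (simp add: minus_one_power_iff)
qed

lemma choose_two_shift:
  assumes "i \<le> 2 * N"
  shows "(i choose 2) + N * (2 * N - i) = (N choose 2) + N * N + nat (binom2 (int i - int N))"
proof -
  have "binom2 (int i) = binom2 (int N) + binom2 (int i - int N) + int N * (int i - int N)"
    using binom2_add [of "int N" "int i - int N"] by simp
  moreover have "int (N * (2 * N - i)) = int N * (2 * int N - int i)"
    using assms by (simp add: of_nat_diff)
  ultimately have "int ((i choose 2) + N * (2 * N - i)) = int ((N choose 2) + N * N) + binom2 (int i - int N)"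
    by (simp only: of_nat_add binom2_of_nat) (simp add: algebra_simps)
  then show ?thesis
    using binom2_nonneg [of "int i - int N"] by linarith
qed

lemma prod_power_diff_lower:
  fixes q z w :: "'a::comm_ring_1"
  assumes "z * w = q"
  shows "(\<Prod>k<N. q ^ N - z * q ^ k) = (-1) ^ N * q ^ (N choose 2) * (z ^ N * qpochhammer w q N)"
proof -
  have "(\<Prod>k<N. q ^ N - z * q ^ k) = (\<Prod>k<N. q ^ k * (q ^ (N - k) - z))"
    by (intro prod.cong) (simp_all add: algebra_simps flip: power_add)
  also have "\<dots> = q ^ (N choose 2) * (\<Prod>k<N. q ^ (N - k) - z)"
    by (simp add: prod.distrib power_sum sum_lessThan_choose_two flip: power_sum)
  also have "(\<Prod>k<N. q ^ (N - k) - z) = (\<Prod>k<N. q ^ Suc k - z)"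
    by (subst prod.nat_diff_reindex [symmetric]) (simp add: Suc_diff_Suc)
  also have "\<dots> = (\<Prod>k<N. - (z * (1 - w * q ^ k)))"
    by (intro prod.cong refl) (simp add: algebra_simps flip: assms)
  also have "\<dots> = (-1) ^ N * (z ^ N * qpochhammer w q N)"
    by (simp add: prod_uminus prod.distrib qpochhammer_def)
  finally show ?thesis
    by (simp only: mult_ac)
qed

lemma prod_power_diff_upper:
  "(\<Prod>k<N. q ^ N - z * q ^ (N + k)) = q ^ (N * N) * qpochhammer z q N"
proof -
  have "(\<Prod>k<N. q ^ N - z * q ^ (N + k)) = (\<Prod>k<N. q ^ N * (1 - z * q ^ k))"
    by (simp add: power_add algebra_simps)
  then show ?thesis
    by (simp add: qpochhammer_def prod.distrib power_mult)
qed

theorem jacobi_triple_product_finite: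
  fixes q z w :: "'a::idom"
  assumes zw: "z * w = q" and q: "q \<noteq> 0"
  shows "z ^ N * qpochhammer z q N * qpochhammer w q N =
    (\<Sum>j\<in>{-int N..int N}. (-1) ^ nat \<bar>j\<bar> * qbinomial q (2 * N) (nat (int N + j))
        * q ^ nat (binom2 j) * z ^ nat (int N + j))"
proof -
  \<comment> \<open>Gauss's q-binomial theorem at x = q^N, y = -z: the first half of the product gives
     z^N (w;q)_N and the second half (z;q)_N, each up to a power of q.\<close>
  define c where "c = (N choose 2) + N * N"
  have "q ^ c * ((-1) ^ N * (z ^ N * qpochhammer z q N * qpochhammer w q N))
      = (\<Prod>k<N + N. q ^ N - z * q ^ k)"
    unfolding prod_lessThan_add prod_power_diff_lower [OF zw] prod_power_diff_upper
    by (simp add: c_def power_add mult_ac)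
  also have "\<dots> = (\<Sum>i\<le>2 * N. qbinomial q (2 * N) i * q ^ (i choose 2) * (- z) ^ i * (q ^ N) ^ (2 * N - i))"
    using qbinomial_theorem [of "q ^ N" "- z" q "2 * N"] by (simp add: mult_2)
  also have "\<dots> = q ^ c * (\<Sum>i\<le>2 * N. (-1) ^ i * qbinomial q (2 * N) i
      * q ^ nat (binom2 (int i - int N)) * z ^ i)"
    unfolding sum_distrib_left
  proof (intro sum.cong refl)
    fix i assume "i \<in> {..2 * N}"
    then have "q ^ (i choose 2) * (q ^ N) ^ (2 * N - i) = q ^ c * q ^ nat (binom2 (int i - int N))"
      by (simp add: c_def choose_two_shift flip: power_mult power_add)
    then show "qbinomial q (2 * N) i * q ^ (i choose 2) * (- z) ^ i * (q ^ N) ^ (2 * N - i)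
        = q ^ c * ((-1) ^ i * qbinomial q (2 * N) i * q ^ nat (binom2 (int i - int N)) * z ^ i)"
      by (simp add: power_minus' mult_ac)
  qed
  finally have "(-1) ^ N * (z ^ N * qpochhammer z q N * qpochhammer w q N)
      = (\<Sum>i\<le>2 * N. (-1) ^ i * qbinomial q (2 * N) i * q ^ nat (binom2 (int i - int N)) * z ^ i)"
    using q by simp
  note signed = this
  have "z ^ N * qpochhammer z q N * qpochhammer w q N
      = (-1) ^ N * ((-1) ^ N * (z ^ N * qpochhammer z q N * qpochhammer w q N))"
    by (simp flip: mult.assoc)
  also have "\<dots> = (-1) ^ N * (\<Sum>i\<le>2 * N. (-1) ^ i * qbinomial q (2 * N) i * q ^ nat (binom2 (int i - int N)) * z ^ i)"
    unfolding signed ..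
  also have "\<dots> = (\<Sum>i\<le>2 * N. (-1) ^ (i + N) * qbinomial q (2 * N) i * q ^ nat (binom2 (int i - int N)) * z ^ i)"
    by (simp add: sum_distrib_left power_add mult_ac)
  also have "\<dots> = (\<Sum>j\<in>{-int N..int N}. (-1) ^ nat \<bar>j\<bar> * qbinomial q (2 * N) (nat (int N + j))
        * q ^ nat (binom2 j) * z ^ nat (int N + j))"
    by (rule sum.reindex_bij_witness [where i = "\<lambda>j. nat (int N + j)" and j = "\<lambda>i. int i - int N"])
      (auto simp: minus_one_power_add_eq_abs_diff)
  finally show ?thesis .
qed

section \<open>Congruences modulo powers of X\<close>

lemma dvd_mult_diff:
  fixes d :: "'a::comm_ring_1"
  assumes "d dvd a - b" "d dvd c - e"
  shows "d dvd a * c - b * e"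
proof -
  have "a * c - b * e = a * (c - e) + (a - b) * e"
    by (simp add: algebra_simps)
  then show ?thesis
    using assms by simp
qed

lemma dvd_prod_diff:
  fixes d :: "'a::comm_ring_1"
  shows "(\<And>i. i \<in> A \<Longrightarrow> d dvd f i - g i) \<Longrightarrow> d dvd prod f A - prod g A"
  by (induction A rule: infinite_finite_induct) (auto intro: dvd_mult_diff)

lemma fps_nth_eq_if_X_power_dvd_diff:
  fixes f g :: "'a::comm_ring_1 fps"
  assumes "fps_X ^ T dvd f - g" "k < T"
  shows "fps_nth f k = fps_nth g k"
proof -
  obtain h where "f - g = fps_X ^ T * h"
    using assms(1) by (elim dvdE)
  then have "fps_nth (f - g) k = 0"
    using assms(2) by (simp add: fps_X_power_mult_nth)
  then show ?thesis
    by simp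
qed

lemma X_power_dvd_qpochhammer_minus_one:
  assumes "T \<le> b"
  shows "fps_X ^ T dvd qpochhammer (fps_X ^ b) (fps_X ^ a) n - (1 :: 'a::comm_ring_1 fps)"
proof -
  have "fps_X ^ T dvd (\<Prod>k<n. 1 - fps_X ^ b * (fps_X ^ a) ^ k) - (\<Prod>k<n. 1 :: 'a fps)"
  proof (rule dvd_prod_diff)
    fix k
    have "fps_X ^ T dvd (fps_X ^ (b + a * k) :: 'a fps)"
      using assms by (simp add: le_imp_power_dvd)
    then show "fps_X ^ T dvd 1 - fps_X ^ b * (fps_X ^ a) ^ k - (1 :: 'a fps)"
      by (simp add: power_add power_mult)
  qed
  then show ?thesis
    by (simp add: qpochhammer_def)
qed

lemma qpochhammer_X_power_nonzero:
  assumes "0 < b"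
  shows "qpochhammer (fps_X ^ b) (fps_X ^ a) n \<noteq> (0 :: 'a::comm_ring_1 fps)"
proof -
  have "fps_nth (qpochhammer (fps_X ^ b) (fps_X ^ a) n) 0 = fps_nth (1 :: 'a fps) 0"
    using assms by (intro fps_nth_eq_if_X_power_dvd_diff X_power_dvd_qpochhammer_minus_one) auto
  then show ?thesis
    by auto
qed

lemma X_power_dvd_qpochhammer_diff:
  assumes "0 < a" "m \<le> n"
  shows "fps_X ^ Suc m dvd qpochhammer (fps_X ^ a) (fps_X ^ a) n
    - (qpochhammer (fps_X ^ a) (fps_X ^ a) m :: 'a::comm_ring_1 fps)"
proof -
  let ?q = "fps_X ^ a :: 'a fps"
  obtain r where n: "n = m + r"
    using assms(2) le_Suc_ex by blast
  have "1 * Suc m \<le> a * Suc m"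
    using assms(1) by (intro mult_le_mono1) simp
  then have "fps_X ^ Suc m dvd qpochhammer (fps_X ^ (a * Suc m)) ?q r - 1"
    by (intro X_power_dvd_qpochhammer_minus_one) simp
  then have "fps_X ^ Suc m dvd qpochhammer (?q * ?q ^ m) ?q r - 1"
    by (simp only: power_mult power_Suc)
  then have "fps_X ^ Suc m dvd qpochhammer ?q ?q m * (qpochhammer (?q * ?q ^ m) ?q r - 1)"
    by (rule dvd_mult)
  then show ?thesis
    by (simp add: n qpochhammer_add algebra_simps)
qed

lemma X_power_dvd_qpochhammer_qbinomial_minus_one_le:
  assumes a: "0 < a" and "i \<le> k" "i + k = 2 * N"
  shows "fps_X ^ Suc i dvd qpochhammer (fps_X ^ a) (fps_X ^ a) N
    * qbinomial (fps_X ^ a) (i + k) i - (1 :: 'a::idom fps)"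
proof -
  let ?q = "fps_X ^ a :: 'a fps"
  have "fps_X ^ Suc N dvd qpochhammer ?q ?q N - qpochhammer ?q ?q k"
    using X_power_dvd_qpochhammer_diff [OF a, of N k] assms
    by (subst minus_diff_eq [symmetric], subst dvd_minus_iff) simp
  moreover have "fps_X ^ Suc i dvd fps_X ^ Suc N"
    using assms by (intro le_imp_power_dvd) simp
  ultimately have "fps_X ^ Suc i dvd qpochhammer ?q ?q N - qpochhammer ?q ?q k"
    by (rule dvd_trans [rotated])
  moreover have "1 * Suc i \<le> a * Suc i"
    using a by (intro mult_le_mono1) simp
  then have "fps_X ^ Suc i dvd qpochhammer (fps_X ^ (a * Suc i)) ?q k - 1"
    by (intro X_power_dvd_qpochhammer_minus_one) simp
  then have "fps_X ^ Suc i dvd qbinomial ?q (i + k) i * qpochhammer ?q ?q k - 1"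
    by (simp only: qbinomial_mult_qpochhammer [OF qpochhammer_X_power_nonzero [OF a]] power_mult)
  ultimately have "fps_X ^ Suc i dvd (qpochhammer ?q ?q N - qpochhammer ?q ?q k)
      * qbinomial ?q (i + k) i + (qbinomial ?q (i + k) i * qpochhammer ?q ?q k - 1)"
    by (intro dvd_add dvd_mult2)
  then show ?thesis
    by (simp add: algebra_simps)
qed

lemma X_power_dvd_qpochhammer_qbinomial_minus_one:
  assumes a: "0 < a" and ik: "i + k = 2 * N"
  shows "fps_X ^ Suc (min i k) dvd qpochhammer (fps_X ^ a) (fps_X ^ a) N
    * qbinomial (fps_X ^ a) (2 * N) i - (1 :: 'a::idom fps)"
proof (cases "i \<le> k")
  case True
  then show ?thesis
    using X_power_dvd_qpochhammer_qbinomial_minus_one_le [OF a True ik] ik by simp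
next
  case False
  have "qbinomial (fps_X ^ a) (2 * N) i = (qbinomial (fps_X ^ a) (k + i) k :: 'a fps)"
    using ik qbinomial_symmetric [where i = k and k = i, OF qpochhammer_X_power_nonzero [OF a]
      qpochhammer_X_power_nonzero [OF a]]
    by (metis add.commute)
  then show ?thesis
    using X_power_dvd_qpochhammer_qbinomial_minus_one_le [OF a, of k i N] ik False
    by (simp add: add.commute)
qed

section \<open>Truncated theta series\<close>

definition theta_exponent :: "nat \<Rightarrow> nat \<Rightarrow> int \<Rightarrow> int" where
  "theta_exponent a b j = int a * binom2 j + int b * j"

definition theta_partial_sum :: "nat \<Rightarrow> nat \<Rightarrow> nat \<Rightarrow> 'a::comm_ring_1 fps" where
  "theta_partial_sum a b N =
     (\<Sum>j\<in>{-int N..int N}. (-1) ^ nat \<bar>j\<bar> * fps_X ^ nat (theta_exponent a b j))"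

lemma fps_nth_minus_one_power_mult:
  "fps_nth ((-1) ^ n * f) k = (-1) ^ n * fps_nth (f :: 'a::comm_ring_1 fps) k"
  by (simp add: minus_one_power_iff)

lemma theta_exponent_double: "2 * theta_exponent a b j = int a * (j * (j - 1)) + 2 * int b * j"
  by (simp add: theta_exponent_def distrib_left mult.left_commute [of 2] binom2_double)

lemma theta_exponent_lower_bound:
  assumes "b \<le> a"
  shows "int (min b (a - b)) * \<bar>j\<bar> \<le> theta_exponent a b j"
proof (cases "0 \<le> j")
  case True
  have "0 \<le> int a * binom2 j"
    by (simp add: binom2_nonneg)
  moreover have "int (min b (a - b)) * j \<le> int b * j"
    using True by (intro mult_right_mono) auto
  ultimately show ?thesis
    using True by (simp add: theta_exponent_def)
next
  case False
  have "int a * - j \<le> int a * binom2 j"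
    using binom2_minus [of "- j"] binom2_nonneg [of "- j"] by (intro mult_left_mono) auto
  moreover have "int (min b (a - b)) * - j \<le> (int a - int b) * - j"
    using False assms by (intro mult_right_mono) auto
  ultimately show ?thesis
    using False by (simp add: theta_exponent_def algebra_simps)
qed

lemma theta_exponent_nonneg:
  assumes "b \<le> a"
  shows "0 \<le> theta_exponent a b j"
proof -
  have "0 \<le> int (min b (a - b)) * \<bar>j\<bar>"
    by simp
  then show ?thesis
    using theta_exponent_lower_bound [OF assms, of j] by linarith
qed

lemma abs_le_theta_exponent: "0 < b \<Longrightarrow> b < a \<Longrightarrow> \<bar>j\<bar> \<le> theta_exponent a b j"
proof -
  assume "0 < b" "b < a"
  then have "1 * \<bar>j\<bar> \<le> int (min b (a - b)) * \<bar>j\<bar>"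
    by (intro mult_right_mono) auto
  then show ?thesis
    using theta_exponent_lower_bound [of b a j] \<open>b < a\<close> by linarith
qed

lemma theta_exponent_inj:
  assumes "0 < b" "b < a" "2 * b \<noteq> a"
  shows "inj (theta_exponent a b)"
proof
  fix j k assume eq: "theta_exponent a b j = theta_exponent a b k"
  have "2 * theta_exponent a b j - 2 * theta_exponent a b k = (j - k) * (int a * (j + k - 1) + 2 * int b)"
    unfolding theta_exponent_double by (simp add: algebra_simps)
  moreover have "int a * (j + k - 1) + 2 * int b \<noteq> 0"
  proof (cases "0 \<le> j + k - 1")
    case True
    then have "0 \<le> int a * (j + k - 1)"
      by simp
    then show ?thesis
      using assms by linarith
  next
    case False
    consider "j + k - 1 = -1" | "j + k - 1 \<le> -2"
      using False by linarith
    then show ?thesis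
    proof cases
      case 2
      then have "int a * (j + k - 1) \<le> int a * -2"
        by (intro mult_left_mono) auto
      then show ?thesis
        using assms by linarith
    qed (use assms in auto)
  qed
  ultimately show "j = k"
    using eq by simp
qed

lemma theta_partial_sum_nth:
  assumes "0 < b" "b < a" "n \<le> N"
  shows "fps_nth (theta_partial_sum a b N) n = (\<Sum>j | theta_exponent a b j = int n. (-1) ^ nat \<bar>j\<bar>)"
proof -
  have sub: "{j. theta_exponent a b j = int n} \<subseteq> {-int N..int N}"
  proof
    fix j assume "j \<in> {j. theta_exponent a b j = int n}"
    then have "\<bar>j\<bar> \<le> int N"
      using abs_le_theta_exponent [OF assms(1,2), of j] assms(3) by simp
    then show "j \<in> {-int N..int N}"
      by (simp add: abs_le_iff)
  qed
  have "fps_nth (theta_partial_sum a b N) n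
      = (\<Sum>j\<in>{-int N..int N}. if theta_exponent a b j = int n then (-1) ^ nat \<bar>j\<bar> else 0)"
    using theta_exponent_nonneg [of b a] assms
    by (auto simp: theta_partial_sum_def fps_sum_nth fps_nth_minus_one_power_mult intro!: sum.cong)
  also have "\<dots> = (\<Sum>j | theta_exponent a b j = int n. (-1) ^ nat \<bar>j\<bar>)"
    using sub by (simp add: sum.If_cases Int_absorb1 Int_commute)
  finally show ?thesis .
qed

lemma theta_partial_sum_nth_sign:
  assumes "0 < b" "b < a" "2 * b \<noteq> a" "n \<le> N"
  shows "fps_nth (theta_partial_sum a b N) n =
    (if \<exists>j. even j \<and> int n = theta_exponent a b j then 1
     else if \<exists>j. odd j \<and> int n = theta_exponent a b j then -1 else (0 :: 'a::comm_ring_1))"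
proof (cases "\<exists>j. int n = theta_exponent a b j")
  case True
  then obtain j0 where j0: "int n = theta_exponent a b j0"
    by blast
  then have unique: "int n = theta_exponent a b j \<longleftrightarrow> j = j0" for j
    using theta_exponent_inj [OF assms(1-3)] by (auto simp: inj_eq)
  then have "fps_nth (theta_partial_sum a b N) n = ((-1) ^ nat \<bar>j0\<bar> :: 'a)"
    using theta_partial_sum_nth [OF assms(1,2,4)] by (simp add: eq_commute [of _ "int n"])
  moreover have "((-1) ^ nat \<bar>j0\<bar> :: 'a) = (if even j0 then 1 else -1)"
    by (simp add: minus_one_power_iff even_nat_iff)
  ultimately show ?thesis
    using unique by auto
next
  case False
  then show ?thesis
    using theta_partial_sum_nth [OF assms(1,2,4)] by (auto simp: eq_commute [of _ "int n"])
qed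

lemma jacobi_triple_product_finite_fps:
  assumes "b \<le> a"
  shows "qpochhammer (fps_X ^ b) (fps_X ^ a) N * qpochhammer (fps_X ^ (a - b)) (fps_X ^ a) N =
    (\<Sum>j\<in>{-int N..int N}. (-1) ^ nat \<bar>j\<bar> * qbinomial (fps_X ^ a) (2 * N) (nat (int N + j))
      * fps_X ^ nat (theta_exponent a b j) :: 'a::idom fps)"
proof -
  have zw: "fps_X ^ b * fps_X ^ (a - b) = (fps_X ^ a :: 'a fps)"
    using assms by (simp flip: power_add)
  have exponent: "(fps_X ^ a) ^ nat (binom2 j) * (fps_X ^ b) ^ nat (int N + j)
      = fps_X ^ (b * N) * (fps_X ^ nat (theta_exponent a b j) :: 'a fps)"
    if "j \<in> {-int N..int N}" for j
  proof -
    have "int (a * nat (binom2 j) + b * nat (int N + j)) = int (b * N + nat (theta_exponent a b j))"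
      using that theta_exponent_nonneg [OF assms, of j] binom2_nonneg [of j]
      by (simp add: theta_exponent_def algebra_simps)
    then have "a * nat (binom2 j) + b * nat (int N + j) = b * N + nat (theta_exponent a b j)"
      by (simp only: of_nat_eq_iff)
    then show ?thesis
      by (simp flip: power_mult power_add)
  qed
  have "fps_X ^ (b * N) * (qpochhammer (fps_X ^ b) (fps_X ^ a) N * qpochhammer (fps_X ^ (a - b)) (fps_X ^ a) N)
      = (\<Sum>j\<in>{-int N..int N}. (-1) ^ nat \<bar>j\<bar> * qbinomial (fps_X ^ a) (2 * N) (nat (int N + j))
      * (fps_X ^ a) ^ nat (binom2 j) * (fps_X ^ b) ^ nat (int N + j) :: 'a fps)"
    using jacobi_triple_product_finite [OF zw, of N] by (simp add: power_mult mult.assoc)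
  also have "\<dots> = fps_X ^ (b * N) * (\<Sum>j\<in>{-int N..int N}. (-1) ^ nat \<bar>j\<bar>
      * qbinomial (fps_X ^ a) (2 * N) (nat (int N + j)) * fps_X ^ nat (theta_exponent a b j))"
    unfolding sum_distrib_left
  proof (intro sum.cong refl)
    fix j assume "j \<in> {-int N..int N}"
    then show "(-1) ^ nat \<bar>j\<bar> * qbinomial (fps_X ^ a) (2 * N) (nat (int N + j))
        * (fps_X ^ a) ^ nat (binom2 j) * (fps_X ^ b) ^ nat (int N + j)
      = fps_X ^ (b * N) * ((-1) ^ nat \<bar>j\<bar> * qbinomial (fps_X ^ a) (2 * N) (nat (int N + j))
        * (fps_X ^ nat (theta_exponent a b j) :: 'a fps))"
      by (simp only: mult.assoc exponent) (simp only: mult_ac)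
  qed
  finally show ?thesis
    by simp
qed

theorem jacobi_triple_product_truncated:
  assumes b: "0 < b" "b < a"
  shows "fps_X ^ Suc N dvd qpochhammer (fps_X ^ a) (fps_X ^ a) N * qpochhammer (fps_X ^ b) (fps_X ^ a) N
    * qpochhammer (fps_X ^ (a - b)) (fps_X ^ a) N - (theta_partial_sum a b N :: 'a::idom fps)"
proof -
  let ?q = "fps_X ^ a :: 'a fps"
  \<comment> \<open>In the j-th term, (q;q)_N times the q-binomial is 1 modulo X^(N+1-|j|),
     and the monomial in front has degree at least |j|.\<close>
  define e where "e j = nat (theta_exponent a b j)" for j
  define c where "c j = qpochhammer ?q ?q N * qbinomial ?q (2 * N) (nat (int N + j))" for j
  have "qpochhammer ?q ?q N * qpochhammer (fps_X ^ b) ?q N * qpochhammer (fps_X ^ (a - b)) ?q N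
      = qpochhammer ?q ?q N * (qpochhammer (fps_X ^ b) ?q N * qpochhammer (fps_X ^ (a - b)) ?q N)"
    by (simp only: mult.assoc)
  also have "\<dots> = (\<Sum>j\<in>{-int N..int N}. (-1) ^ nat \<bar>j\<bar> * fps_X ^ e j * c j)"
    unfolding jacobi_triple_product_finite_fps [OF less_imp_le [OF b(2)]] sum_distrib_left
    by (intro sum.cong refl) (simp add: e_def c_def mult_ac)
  finally have "qpochhammer ?q ?q N * qpochhammer (fps_X ^ b) ?q N * qpochhammer (fps_X ^ (a - b)) ?q N
      - theta_partial_sum a b N
      = (\<Sum>j\<in>{-int N..int N}. (-1) ^ nat \<bar>j\<bar> * fps_X ^ e j * c j - (-1) ^ nat \<bar>j\<bar> * fps_X ^ e j)"
    by (simp add: theta_partial_sum_def e_def sum_subtractf)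
  also have "\<dots> = (\<Sum>j\<in>{-int N..int N}. (-1) ^ nat \<bar>j\<bar> * fps_X ^ e j * (c j - 1))"
    by (simp add: right_diff_distrib)
  also have "fps_X ^ Suc N dvd \<dots>"
  proof (intro dvd_sum)
    fix j assume j: "j \<in> {-int N..int N}"
    have "fps_X ^ Suc (min (nat (int N + j)) (nat (int N - j))) dvd c j - 1"
      unfolding c_def using b j by (intro X_power_dvd_qpochhammer_qbinomial_minus_one) auto
    then have "fps_X ^ (e j + Suc (min (nat (int N + j)) (nat (int N - j)))) dvd fps_X ^ e j * (c j - 1)"
      by (simp add: power_add mult_dvd_mono)
    moreover have "Suc N \<le> e j + Suc (min (nat (int N + j)) (nat (int N - j)))"
      using j abs_le_theta_exponent [OF b, of j] by (auto simp: e_def)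
    ultimately have "fps_X ^ Suc N dvd fps_X ^ e j * (c j - 1)"
      using power_le_dvd by blast
    then show "fps_X ^ Suc N dvd (-1) ^ nat \<bar>j\<bar> * fps_X ^ e j * (c j - 1)"
      by (simp add: mult.assoc)
  qed
  finally show ?thesis .
qed

theorem euler_pentagonal_truncated:
  assumes "0 < a"
  shows "fps_X ^ Suc N dvd qpochhammer (fps_X ^ a) (fps_X ^ a) N - (theta_partial_sum (3 * a) a N :: 'a::idom fps)"
proof -
  let ?q = "fps_X ^ a :: 'a fps"
  \<comment> \<open>Sorting the factors of (q;q)_(3N) by their exponent mod 3 gives a triple product with base q^3.\<close>
  have "qpochhammer ?q ?q (3 * N) = (\<Prod>r<3. qpochhammer (?q * ?q ^ r) (?q ^ 3) N)"
    by (rule qpochhammer_mult)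
  also have "\<dots> = qpochhammer (?q ^ 3) (?q ^ 3) N * qpochhammer ?q (?q ^ 3) N
      * qpochhammer (?q ^ 2) (?q ^ 3) N"
    by (simp add: lessThan_nat_numeral eval_nat_numeral mult_ac)
  also have "\<dots> = qpochhammer (fps_X ^ (3 * a)) (fps_X ^ (3 * a)) N * qpochhammer (fps_X ^ a) (fps_X ^ (3 * a)) N
      * qpochhammer (fps_X ^ (3 * a - a)) (fps_X ^ (3 * a)) N"
    by (simp add: mult.commute [of _ a] power_mult)
  finally have "fps_X ^ Suc N dvd qpochhammer ?q ?q (3 * N) - theta_partial_sum (3 * a) a N"
    using jacobi_triple_product_truncated [of a "3 * a" N] assms by simp
  moreover have "fps_X ^ Suc N dvd qpochhammer ?q ?q N - qpochhammer ?q ?q (3 * N)"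
    using X_power_dvd_qpochhammer_diff [OF assms, of N "3 * N"]
    by (subst minus_diff_eq [symmetric], subst dvd_minus_iff) simp
  ultimately show ?thesis
    using dvd_add by fastforce
qed

section \<open>Partitions with restricted parts\<close>

definition partitions_with_parts :: "nat set \<Rightarrow> nat \<Rightarrow> nat multiset set" where
  "partitions_with_parts A m = {M. set_mset M \<subseteq> A \<and> sum_mset M = m}"

definition partition_fps :: "nat set \<Rightarrow> int fps" where
  "partition_fps A = Abs_fps (\<lambda>m. int (card (partitions_with_parts A m)))"

lemma finite_partitions_with_parts:
  assumes "0 \<notin> A"
  shows "finite (partitions_with_parts A m)"
proof (rule finite_subset)
  show "partitions_with_parts A m \<subseteq> (\<Union>s\<le>m. multisets_of_size {..m} s)"
  proof
    fix M assume "M \<in> partitions_with_parts A m"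
    then have M: "0 \<notin># M" "sum_mset M = m"
      using assms by (auto simp: partitions_with_parts_def)
    have "size M \<le> sum_mset M"
      using M(1) by (induction M) auto
    moreover have "p \<le> sum_mset M" if "p \<in># M" for p
      using that by (induction M) auto
    ultimately show "M \<in> (\<Union>s\<le>m. multisets_of_size {..m} s)"
      using M(2) by (auto simp: multisets_of_size_def)
  qed
qed auto

lemma partitions_with_parts_insert:
  assumes "0 \<notin> A" "0 < k" "k \<notin> A"
  shows "card (partitions_with_parts (insert k A) m) = card (partitions_with_parts A m)
    + (if k \<le> m then card (partitions_with_parts (insert k A) (m - k)) else 0)"
proof -
  let ?P = "partitions_with_parts (insert k A) m"
  have split: "?P = partitions_with_parts A m \<union> {M \<in> ?P. k \<in># M}"
    using assms(3) by (auto simp: partitions_with_parts_def)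
  have "{M \<in> ?P. k \<in># M} = (if k \<le> m then add_mset k ` partitions_with_parts (insert k A) (m - k) else {})"
  proof (cases "k \<le> m")
    case True
    have "M \<in> add_mset k ` partitions_with_parts (insert k A) (m - k)" if "M \<in> ?P" "k \<in># M" for M
      using that by (intro image_eqI [of _ _ "M - {#k#}"])
        (auto simp: partitions_with_parts_def sum_mset.remove dest: in_diffD)
    then show ?thesis
      using True by (auto simp: partitions_with_parts_def)
  next
    case False
    have "k \<le> sum_mset M" if "k \<in># M" for M :: "nat multiset"
      using that by (induction M) auto
    then show ?thesis
      using False by (auto simp: partitions_with_parts_def)
  qed
  moreover have "partitions_with_parts A m \<inter> {M \<in> ?P. k \<in># M} = {}"
    using assms(3) by (auto simp: partitions_with_parts_def)
  moreover have "finite (partitions_with_parts A m)" "finite (partitions_with_parts (insert k A) m')" for m'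
    using assms by (simp_all add: finite_partitions_with_parts)
  ultimately show ?thesis
    by (subst split, subst card_Un_disjoint) (auto simp: card_image inj_on_def)
qed

lemma partition_fps_insert:
  assumes "0 \<notin> A" "0 < k" "k \<notin> A"
  shows "partition_fps (insert k A) * (1 - fps_X ^ k) = partition_fps A"
proof (rule fps_ext)
  fix m
  show "fps_nth (partition_fps (insert k A) * (1 - fps_X ^ k)) m = fps_nth (partition_fps A) m"
    using partitions_with_parts_insert [OF assms, of m]
    by (simp add: partition_fps_def right_diff_distrib fps_X_power_mult_right_nth)
qed

theorem partition_fps_mult_prod:
  assumes "finite A" "0 \<notin> A"
  shows "partition_fps A * (\<Prod>k\<in>A. 1 - fps_X ^ k) = 1"
  using assms
proof (induction A rule: finite_induct)
  case empty
  have "partitions_with_parts {} m = (if m = 0 then {{#}} else {})" for m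
    by (auto simp: partitions_with_parts_def)
  then show ?case
    by (simp add: fps_eq_iff partition_fps_def)
next
  case (insert k A)
  then have "partition_fps (insert k A) * (1 - fps_X ^ k) = partition_fps A"
    by (intro partition_fps_insert) auto
  then show ?case
    using insert by (simp add: mult.assoc [symmetric])
qed

lemma residue_classes_bij:
  fixes a :: nat
  assumes "R \<subseteq> {1..<a}"
  shows "bij_betw (\<lambda>(r, t). r + a * t) (R \<times> {..<N}) {k \<in> {1..a * N}. k mod a \<in> R}"
proof (rule bij_betw_byWitness [where f' = "\<lambda>k. (k mod a, k div a)"])
  show "\<forall>x\<in>R \<times> {..<N}.
      ((case x of (r, t) \<Rightarrow> r + a * t) mod a, (case x of (r, t) \<Rightarrow> r + a * t) div a) = x"
  proof
    fix x assume "x \<in> R \<times> {..<N}"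
    then obtain r t where x: "x = (r, t)" "r \<in> R"
      by auto
    then have "r < a"
      using assms by auto
    then show "((case x of (r, t) \<Rightarrow> r + a * t) mod a, (case x of (r, t) \<Rightarrow> r + a * t) div a) = x"
      using x by (simp add: mult.commute [of a t])
  qed
  show "\<forall>k\<in>{k \<in> {1..a * N}. k mod a \<in> R}. (case (k mod a, k div a) of (r, t) \<Rightarrow> r + a * t) = k"
    by simp
  show "(\<lambda>(r, t). r + a * t) ` (R \<times> {..<N}) \<subseteq> {k \<in> {1..a * N}. k mod a \<in> R}"
  proof
    fix k assume "k \<in> (\<lambda>(r, t). r + a * t) ` (R \<times> {..<N})"
    then obtain r t where k: "k = r + a * t" "r \<in> R" "t < N"
      by auto
    then have "r < a" "0 < r"
      using assms by auto
    then have "r + a * t \<le> a * Suc t"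
      by simp
    also have "\<dots> \<le> a * N"
      using k(3) by (intro mult_le_mono2) simp
    finally show "k \<in> {k \<in> {1..a * N}. k mod a \<in> R}"
      using k \<open>r < a\<close> \<open>0 < r\<close> by (simp add: mult.commute [of a t])
  qed
  show "(\<lambda>k. (k mod a, k div a)) ` {k \<in> {1..a * N}. k mod a \<in> R} \<subseteq> R \<times> {..<N}"
  proof clarify
    fix k assume k: "k \<in> {1..a * N}" "k mod a \<in> R"
    then have "0 < k mod a" "k mod a < a"
      using assms by auto
    have "k \<le> a * N"
      using k(1) by simp
    then have "a * (k div a) < a * N"
      using \<open>0 < k mod a\<close> mult_div_mod_eq [of a k] by linarith
    then show "k div a < N"
      using \<open>k mod a < a\<close> by simp
  qed
qed

lemma prod_residue_classes:
  fixes a :: nat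
  assumes "R \<subseteq> {1..<a}"
  shows "(\<Prod>k \<in> {k \<in> {1..a * N}. k mod a \<in> R}. 1 - fps_X ^ k)
    = (\<Prod>r\<in>R. qpochhammer (fps_X ^ r) (fps_X ^ a) N :: 'a::comm_ring_1 fps)"
proof -
  have "finite R"
    using assms finite_subset by blast
  have "(\<Prod>k \<in> {k \<in> {1..a * N}. k mod a \<in> R}. 1 - fps_X ^ k)
      = (\<Prod>(r, t) \<in> R \<times> {..<N}. 1 - fps_X ^ (r + a * t) :: 'a fps)"
    using prod.reindex_bij_betw [OF residue_classes_bij [OF assms, of N], of "\<lambda>k. 1 - fps_X ^ k :: 'a fps", symmetric]
    by (simp add: case_prod_unfold)
  also have "\<dots> = (\<Prod>r\<in>R. \<Prod>t<N. 1 - fps_X ^ r * (fps_X ^ a) ^ t)"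
    by (simp add: prod.cartesian_product power_add power_mult)
  finally show ?thesis
    by (simp add: qpochhammer_def)
qed

lemma partition_theta_congruence:
  assumes b: "0 < b" "b < a" "2 * b \<noteq> a"
  shows "fps_X ^ Suc N dvd partition_fps {k \<in> {1..a * N}. k mod a \<in> {b, a - b}} * theta_partial_sum a b N
    - theta_partial_sum (3 * a) a N"
proof -
  let ?A = "{k \<in> {1..a * N}. k mod a \<in> {b, a - b}}"
  let ?q = "fps_X ^ a :: int fps"
  let ?\<Pi> = "qpochhammer (fps_X ^ b) ?q N * qpochhammer (fps_X ^ (a - b)) ?q N"
  \<comment> \<open>Modulo X^(N+1): F theta(a,b) = F \<Pi> (q;q)_N = (q;q)_N = theta(3a,a), where F \<Pi> = 1.\<close>
  have "(\<Prod>k\<in>?A. 1 - fps_X ^ k) = (\<Prod>r\<in>{b, a - b}. qpochhammer (fps_X ^ r) ?q N)"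
    using b by (intro prod_residue_classes) auto
  also have "\<dots> = ?\<Pi>"
    using b by simp
  finally have inverse: "partition_fps ?A * ?\<Pi> = 1"
    using partition_fps_mult_prod [of ?A] by simp
  have "fps_X ^ Suc N dvd qpochhammer ?q ?q N * ?\<Pi> - theta_partial_sum a b N"
    using jacobi_triple_product_truncated [OF b(1,2), of N] by (simp add: mult.assoc)
  then have "fps_X ^ Suc N dvd theta_partial_sum a b N - qpochhammer ?q ?q N * ?\<Pi>"
    by (subst minus_diff_eq [symmetric], subst dvd_minus_iff)
  then have "fps_X ^ Suc N dvd partition_fps ?A * (theta_partial_sum a b N - qpochhammer ?q ?q N * ?\<Pi>)"
    by (rule dvd_mult)
  moreover have "fps_X ^ Suc N dvd qpochhammer ?q ?q N - theta_partial_sum (3 * a) a N"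
    using b by (intro euler_pentagonal_truncated) simp
  ultimately have "fps_X ^ Suc N dvd partition_fps ?A * (theta_partial_sum a b N - qpochhammer ?q ?q N * ?\<Pi>)
      + (qpochhammer ?q ?q N - theta_partial_sum (3 * a) a N)"
    by (rule dvd_add)
  also have "partition_fps ?A * (theta_partial_sum a b N - qpochhammer ?q ?q N * ?\<Pi>)
      + (qpochhammer ?q ?q N - theta_partial_sum (3 * a) a N)
      = partition_fps ?A * theta_partial_sum a b N - theta_partial_sum (3 * a) a N"
    using inverse by (simp add: algebra_simps)
  finally show ?thesis .
qed

lemma parts_count_eq_card_partitions_with_parts:
  assumes "m \<le> K"
  shows "parts_count R (int m) = int (card (partitions_with_parts {k \<in> {1..K}. k mod 6 \<in> R} m))"
proof -
  have "p \<le> sum_mset M" if "p \<in># M" for p and M :: "nat multiset"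
    using that by (induction M) auto
  then have "partitions_with_parts {k \<in> {1..K}. k mod 6 \<in> R} m
      = {M. (\<forall>p\<in>#M. 0 < p \<and> p mod 6 \<in> R) \<and> sum_mset M = m}"
    using assms by (auto simp: partitions_with_parts_def Suc_le_eq intro: order_trans)
  then show ?thesis
    by (simp add: parts_count_def)
qed

lemma parts_count_theta_convolution:
  assumes b: "0 < b" "b < 3"
  shows "(\<Sum>j\<in>{-int N..int N}. (-1) ^ nat \<bar>j\<bar> * parts_count {b, 6 - b} (int N - theta_exponent 6 b j))
    = fps_nth (theta_partial_sum 18 6 N) N"
proof -
  let ?A = "{k \<in> {1..6 * N}. k mod 6 \<in> {b, 6 - b}}"
  have "fps_nth (partition_fps ?A * theta_partial_sum 6 b N) N = fps_nth (theta_partial_sum 18 6 N) N"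
    using fps_nth_eq_if_X_power_dvd_diff [OF partition_theta_congruence [of b 6 N]] b by simp
  moreover have "fps_nth (partition_fps ?A * fps_X ^ nat (theta_exponent 6 b j)) N
      = parts_count {b, 6 - b} (int N - theta_exponent 6 b j)" for j
  proof (cases "nat (theta_exponent 6 b j) \<le> N")
    case True
    let ?e = "nat (theta_exponent 6 b j)"
    have "fps_nth (partition_fps ?A * fps_X ^ ?e) N = int (card (partitions_with_parts ?A (N - ?e)))"
      using True by (simp add: fps_X_power_mult_right_nth partition_fps_def)
    also have "\<dots> = parts_count {b, 6 - b} (int (N - ?e))"
      by (rule parts_count_eq_card_partitions_with_parts [symmetric]) simp
    also have "int (N - ?e) = int N - theta_exponent 6 b j"
      using True theta_exponent_nonneg [of b 6 j] b by simp
    finally show ?thesis .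
  next
    case False
    then show ?thesis
      by (simp add: fps_X_power_mult_right_nth parts_count_def)
  qed
  ultimately show ?thesis
    by (simp add: theta_partial_sum_def sum_distrib_left fps_sum_nth mult.left_commute [of _ "(-1) ^ _"]
        fps_nth_minus_one_power_mult)
qed

lemma sum_symmetric_interval:
  "(\<Sum>j\<in>{-int N..int N}. g j) = g 0 + (\<Sum>j\<in>{1..int N}. g j + g (- j))"
proof (induction N)
  case (Suc N)
  have "{-int (Suc N)..int (Suc N)} = insert (int N + 1) (insert (- (int N + 1)) {-int N..int N})"
    "{1..int (Suc N)} = insert (int N + 1) {1..int N}"
    by auto
  then show ?case
    using Suc by (simp add: algebra_simps)
qed simp

lemma theta_exponent_six:
  "theta_exponent 6 b j = j * (3 * j - (3 - int b))"
  "theta_exponent 6 b (- j) = j * (3 * j + (3 - int b))"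
  using binom2_double [of j] binom2_minus [of j]
  by (simp_all add: theta_exponent_def algebra_simps)

lemma parts_count_pentagonal_identity:
  assumes b: "0 < b" "b < 3" and n: "0 \<le> n"
  shows "parts_count {b, 6 - b} n + (\<Sum>j=1..n. (-1) ^ nat j
      * (parts_count {b, 6 - b} (n - j * (3 * j - (3 - int b)))
        + parts_count {b, 6 - b} (n - j * (3 * j + (3 - int b)))))
    = fps_nth (theta_partial_sum 18 6 (nat n)) (nat n)"
proof -
  obtain N where N: "n = int N"
    using n nonneg_int_cases by blast
  define g where "g j = (-1) ^ nat \<bar>j\<bar> * parts_count {b, 6 - b} (n - theta_exponent 6 b j)" for j
  have "fps_nth (theta_partial_sum 18 6 (nat n)) (nat n) = (\<Sum>j\<in>{-int N..int N}. g j)"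
    using parts_count_theta_convolution [OF b, of N] by (simp add: N g_def)
  also have "\<dots> = g 0 + (\<Sum>j\<in>{1..n}. g j + g (- j))"
    unfolding sum_symmetric_interval N ..
  also have "\<dots> = parts_count {b, 6 - b} n + (\<Sum>j=1..n. (-1) ^ nat j
      * (parts_count {b, 6 - b} (n - j * (3 * j - (3 - int b)))
        + parts_count {b, 6 - b} (n - j * (3 * j + (3 - int b)))))"
    by (intro arg_cong2 [where f = "(+)"] sum.cong) (auto simp: g_def theta_exponent_six algebra_simps)
  finally show ?thesis ..
qed

lemma theta_exponent_18_6: "theta_exponent 18 6 j = 6 * (j * (3 * j - 1) div 2)"
proof -
  have "j * (3 * j - 1) div 2 * 2 = j * (3 * j - 1)"
    by simp
  moreover have "2 * theta_exponent 18 6 j = 6 * (j * (3 * j - 1))"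
    unfolding theta_exponent_double by (simp add: algebra_simps)
  ultimately show ?thesis
    by linarith
qed

theorem corollary2:
  fixes n :: int
  assumes "n \<ge> 0"
  shows "s1 n + (\<Sum>j=1..n. (-1) ^ nat j * (s1 (n - j*(3*j-2)) + s1 (n - j*(3*j+2))))
       = s2 n + (\<Sum>j=1..n. (-1) ^ nat j * (s2 (n - j*(3*j-1)) + s2 (n - j*(3*j+1))))
     \<and> s1 n + (\<Sum>j=1..n. (-1) ^ nat j * (s1 (n - j*(3*j-2)) + s1 (n - j*(3*j+2))))
       = (if \<exists>j::int. even j \<and> n = 6 * (j*(3*j-1) div 2) then 1
          else if \<exists>j::int. odd j \<and> n = 6 * (j*(3*j-1) div 2) then -1
          else 0)"
proof -
  let ?c = "fps_nth (theta_partial_sum 18 6 (nat n)) (nat n) :: int"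
  have "s1 n + (\<Sum>j=1..n. (-1) ^ nat j * (s1 (n - j*(3*j-2)) + s1 (n - j*(3*j+2)))) = ?c"
    using parts_count_pentagonal_identity [of 1 n] assms by (simp add: s1_def)
  moreover have "s2 n + (\<Sum>j=1..n. (-1) ^ nat j * (s2 (n - j*(3*j-1)) + s2 (n - j*(3*j+1)))) = ?c"
    using parts_count_pentagonal_identity [of 2 n] assms by (simp add: s2_def)
  moreover have "?c = (if \<exists>j::int. even j \<and> n = 6 * (j*(3*j-1) div 2) then 1
      else if \<exists>j::int. odd j \<and> n = 6 * (j*(3*j-1) div 2) then -1 else 0)"
    unfolding theta_exponent_18_6 [symmetric]
    using theta_partial_sum_nth_sign [of 6 18 "nat n" "nat n", unfolded nat_0_le [OF assms]] by simp
  ultimately show ?thesis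
    by simp
qed

end
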